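(* Let $G$ be a group of order $80$ whose Sylow $5$-subgroups are not normal. Then every connected Cayley graph on $G$ has a hamiltonian cycle.
   Context: For a group $G$ and a subset $S \subseteq G$, the Cayley graph $\mathrm{Cay}(G;S)$ has vertex set $G$, with $g$ adjacent to $gs$ for every $g \in G$ and $s \in S \cup S^{-1}$; it is connected iff $S$ generates $G$. *)

theory Defs
  imports "HOL-Algebra.Algebra"
begin

definition sylow_subgroup :: "('a, 'b) monoid_scheme \<Rightarrow> nat \<Rightarrow> 'a set \<Rightarrow> bool" where
  "sylow_subgroup G p P \<longleftrightarrow>
     subgroup P G \<and> card P = p ^ multiplicity p (order G)"

definition cayley_adj :: "('a, 'b) monoid_scheme \<Rightarrow> 'a set \<Rightarrow> 'a \<Rightarrow> 'a \<Rightarrow> bool" where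
  "cayley_adj G S g h \<longleftrightarrow> g \<in> carrier G \<and> h \<in> carrier G \<and>
     (\<exists>s \<in> S \<union> (\<lambda>x. inv\<^bsub>G\<^esub> x) ` S. h = g \<otimes>\<^bsub>G\<^esub> s)"

definition cayley_hamiltonian :: "('a, 'b) monoid_scheme \<Rightarrow> 'a set \<Rightarrow> bool" where
  "cayley_hamiltonian G S \<longleftrightarrow>
     (\<exists>vs. distinct vs \<and> set vs = carrier G \<and> length vs \<ge> 3 \<and>
        (\<forall>i < length vs. cayley_adj G S (vs ! i) (vs ! ((i + 1) mod length vs))))"

end

theory Submission
  imports Defs
begin

lemma funpow_mod_period:
  assumes "f ` A \<subseteq> A" "\<And>y. y \<in> A \<Longrightarrow> (f ^^ p) y = y" "x \<in> A"
  shows "(f ^^ n) x = (f ^^ (n mod p)) x"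
proof -
  have "(f ^^ (p * k)) x = x" for k
    by (induction k) (simp_all add: funpow_add assms)
  then show ?thesis
    by (metis (no_types) comp_apply funpow_add mod_mult_div_eq)
qed

lemma funpow_in_invariant: "f ` A \<subseteq> A \<Longrightarrow> x \<in> A \<Longrightarrow> (f ^^ n) x \<in> A"
  by (induction n) auto

lemma prime_dvd_card_of_fixpoint_free_period:
  assumes p: "Factorial_Ring.prime p" and A: "finite A" "f ` A \<subseteq> A"
    and period: "\<And>x. x \<in> A \<Longrightarrow> (f ^^ p) x = x"
    and fixpoint_free: "\<And>x. x \<in> A \<Longrightarrow> f x \<noteq> x"
  shows "p dvd card A"
proof -
  have mod_period: "(f ^^ n) x = (f ^^ (n mod p)) x" if "x \<in> A" for n x
    using funpow_mod_period[of f A p] A(2) period that by blast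
  define orb where "orb x = (\<lambda>i. (f ^^ i) x) ` {..<p}" for x
  have no_return: "(f ^^ d) x \<noteq> x" if x: "x \<in> A" and d: "0 < d" "d < p" for x d
  proof
    assume returns: "(f ^^ d) x = x"
    have "coprime d p"
      using p d by (metis coprime_commute nat_dvd_not_less prime_imp_coprime)
    then obtain u v where "d * u = p * v + 1"
      using bezout_nat[of d p] d by auto
    then have "(d * u) mod p = 1"
      using prime_gt_1_nat[OF p] by (simp add: mod_Suc)
    have "(f ^^ (d * u)) x = x"
      by (induction u) (simp_all add: funpow_add returns)
    then show False
      using mod_period[OF x, of "d * u"] \<open>(d * u) mod p = 1\<close> fixpoint_free x by simp
  qed
  have card_orb: "card (orb x) = p" if x: "x \<in> A" for x
  proof -
    have "(f ^^ i) x \<noteq> (f ^^ j) x" if ij: "i < j" "j < p" for i j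
    proof
      assume "(f ^^ i) x = (f ^^ j) x"
      then have "(f ^^ (j - i)) ((f ^^ i) x) = (f ^^ i) x"
        using ij(1) by (metis funpow_add le_add_diff_inverse2 less_imp_le o_apply)
      then show False
        using no_return[OF funpow_in_invariant[OF A(2) x]] ij by simp
    qed
    then have "inj_on (\<lambda>i. (f ^^ i) x) {..<p}"
      unfolding inj_on_def by (metis lessThan_iff linorder_neqE_nat)
    then show ?thesis
      unfolding orb_def by (simp add: card_image)
  qed
  have finite_orb: "finite (orb x)" for x
    unfolding orb_def by simp
  have orb_eq: "orb y = orb x" if x: "x \<in> A" and y: "y \<in> orb x" for x y
  proof -
    obtain i where y_def: "y = (f ^^ i) x" using y unfolding orb_def by blast
    have "orb y \<subseteq> orb x"
    proof
      fix z assume "z \<in> orb y"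
      then obtain j where "z = (f ^^ (j + i)) x" unfolding orb_def y_def by (auto simp: funpow_add)
      then have "z = (f ^^ ((j + i) mod p)) x"
        using mod_period[OF x] by simp
      then show "z \<in> orb x"
        using prime_gt_0_nat[OF p] unfolding orb_def by auto
    qed
    moreover have "card (orb y) = card (orb x)"
      using card_orb x funpow_in_invariant[OF A(2) x] y_def by simp
    ultimately show ?thesis
      using card_subset_eq[OF finite_orb] by blast
  qed
  have "A = \<Union> (orb ` A)"
  proof
    show "A \<subseteq> \<Union> (orb ` A)"
      using prime_gt_0_nat[OF p] unfolding orb_def by (force intro: image_eqI[of _ _ 0])
    show "\<Union> (orb ` A) \<subseteq> A"
      using funpow_in_invariant[OF A(2)] unfolding orb_def by blast
  qed
  moreover have "p dvd card (\<Union> (orb ` A))"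
  proof (rule dvd_partition)
    show "finite (\<Union> (orb ` A))" using A(1) finite_orb by simp
    show "\<forall>c\<in>orb ` A. p dvd card c" using card_orb by auto
    show "\<forall>c1\<in>orb ` A. \<forall>c2\<in>orb ` A. c1 \<noteq> c2 \<longrightarrow> c1 \<inter> c2 = {}"
      using orb_eq by (metis disjoint_iff image_iff)
  qed
  ultimately show ?thesis by simp
qed

lemma dvd_16_cases: "d dvd (16::nat) \<Longrightarrow> d = 1 \<or> d = 2 \<or> d = 4 \<or> d = 8 \<or> d = 16"
proof -
  assume "d dvd 16"
  then obtain i where "i \<le> 4" "d = 2 ^ i"
    using divides_primepow_nat[of 2 d 4] by auto
  then show ?thesis
    by (auto simp: le_Suc_eq numeral_eq_Suc)
qed

lemma (in group_action) funpow_action_eq_action_pow: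
  assumes "g \<in> carrier G" "x \<in> E"
  shows "(\<phi> g ^^ n) x = \<phi> (g [^] n) x"
proof (induction n)
  case 0
  show ?case using id_eq_one assms(2) by (metis funpow_0 nat_pow_0 restrict_apply')
next
  case (Suc n)
  interpret G: group G using group_hom group_hom.axioms(1) by blast
  have "(\<phi> g ^^ Suc n) x = \<phi> g (\<phi> (g [^] n) x)"
    using Suc by simp
  also have "\<dots> = \<phi> (g \<otimes> g [^] n) x"
    using composition_rule[OF assms(2) assms(1) G.nat_pow_closed[OF assms(1)]] by simp
  also have "\<dots> = \<phi> (g [^] Suc n) x"
    by (simp only: G.nat_pow_Suc2[OF assms(1)])
  finally show ?case .
qed

lemma (in group_action) card_mod_prime_eq_card_fixed_points:
  assumes p: "Factorial_Ring.prime p" and g: "g \<in> carrier G" "g [^] p = \<one>"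
    and A: "finite A" "A \<subseteq> E" "\<phi> g ` A \<subseteq> A"
  shows "card A mod p = card {x \<in> A. \<phi> g x = x} mod p"
proof -
  define Fix where "Fix = {x \<in> A. \<phi> g x = x}"
  have "\<phi> g x \<notin> Fix" if "x \<in> A - Fix" for x
    using that A(2,3) inj_onD[OF inj_prop[OF g(1)]] unfolding Fix_def by blast
  then have moves: "\<phi> g ` (A - Fix) \<subseteq> A - Fix"
    using A(3) by blast
  have "p dvd card (A - Fix)"
  proof (rule prime_dvd_card_of_fixpoint_free_period[OF p _ moves])
    show "finite (A - Fix)" using A(1) by simp
    show "(\<phi> g ^^ p) x = x" if "x \<in> A - Fix" for x
      using that A(2) funpow_action_eq_action_pow[OF g(1)] g(2) id_eq_one
      by (metis Diff_iff restrict_apply' subsetD)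
    show "\<phi> g x \<noteq> x" if "x \<in> A - Fix" for x
      using that unfolding Fix_def by blast
  qed
  then obtain k where "card (A - Fix) = p * k" by blast
  moreover have "Fix \<subseteq> A" unfolding Fix_def by blast
  then have "card A = card (A - Fix) + card Fix"
    using A(1) by (simp add: card_Diff_subset card_mono finite_subset)
  ultimately show ?thesis
    unfolding Fix_def by simp
qed

context group
begin

lemma inv_mult_cancel_left [simp]:
  "x \<in> carrier G \<Longrightarrow> y \<in> carrier G \<Longrightarrow> inv x \<otimes> (x \<otimes> y) = y"
  by (simp flip: m_assoc)

lemma mult_inv_cancel_left [simp]:
  "x \<in> carrier G \<Longrightarrow> y \<in> carrier G \<Longrightarrow> x \<otimes> (inv x \<otimes> y) = y"
  by (simp flip: m_assoc)

lemma subgroup_nat_pow_closed: "subgroup H G \<Longrightarrow> h \<in> H \<Longrightarrow> h [^] (n::nat) \<in> H"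
  by (induction n) (auto simp: subgroup.one_closed subgroup.m_closed)

lemma pow_mod_eq:
  assumes "x \<in> carrier G" "x [^] (m::nat) = \<one>"
  shows "x [^] n = x [^] (n mod m)"
proof -
  have "x [^] n = x [^] (m * (n div m)) \<otimes> x [^] (n mod m)"
    using nat_pow_mult[OF assms(1), of "m * (n div m)" "n mod m"] by simp
  moreover have "x [^] (m * (n div m)) = \<one>"
    using nat_pow_pow[OF assms(1), of m "n div m"] assms(2) by simp
  ultimately show ?thesis
    using assms(1) by simp
qed

lemma eq_one_if_coprime_pows:
  assumes "x \<in> carrier G" "x [^] (m::nat) = \<one>" "x [^] (n::nat) = \<one>" "coprime m n"
  shows "x = \<one>"
proof -
  have "ord x dvd m" "ord x dvd n"
    using pow_eq_id assms(1-3) by auto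
  then have "ord x = 1"
    using coprime_common_divisor_nat assms(4) by blast
  then show ?thesis
    using ord_eq_1 assms(1) by simp
qed

lemma card_subgroup_dvd_card:
  assumes "subgroup H G" "subgroup K G" "K \<subseteq> H" "finite H"
  shows "card K dvd card H"
proof -
  interpret H: group "G\<lparr>carrier := H\<rparr>"
    using subgroup.subgroup_is_group assms(1) is_group by blast
  have "subgroup K (G\<lparr>carrier := H\<rparr>)"
    using subgroup_incl assms by blast
  then have "card (rcosets\<^bsub>G\<lparr>carrier := H\<rparr>\<^esub> K) * card K = card H"
    using H.lagrange by (simp add: order_def)
  then show ?thesis
    by (metis dvd_triv_right)
qed

lemma card_subgroup_dvd_order:
  assumes "subgroup H G"
  shows "card H dvd order G"
  using lagrange[OF assms] by (metis dvd_triv_right)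

lemma subgroup_pow_card_eq_one:
  assumes "subgroup H G" "finite H" "h \<in> H"
  shows "h [^] card H = \<one>"
proof -
  have h: "h \<in> carrier G" using subgroup.mem_carrier[OF assms(1,3)] .
  have "generate G {h} \<subseteq> H"
    using generate_subgroup_incl[of "{h}" H] assms(1,3) by simp
  then have "ord h dvd card H"
    using card_subgroup_dvd_card[OF assms(1) generate_is_subgroup _ assms(2)] h generate_pow_card[OF h]
    by simp
  then show ?thesis using pow_eq_id[OF h] by simp
qed

lemma generate_singleton_eq_pows:
  assumes "x \<in> carrier G" "x [^] (m::nat) = \<one>" "0 < m"
  shows "generate G {x} = (\<lambda>i. x [^] i) ` {..<m}"
proof -
  have "ord x \<noteq> 0" using assms pow_eq_id by fastforce
  then have "generate G {x} = {x [^] k | k. k \<in> (UNIV :: nat set)}"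
    using generate_pow_nat[OF assms(1)] by blast
  also have "\<dots> = (\<lambda>i. x [^] i) ` {..<m}"
  proof
    show "{x [^] k | k. k \<in> (UNIV :: nat set)} \<subseteq> (\<lambda>i. x [^] i) ` {..<m}"
    proof
      fix y assume "y \<in> {x [^] k | k. k \<in> (UNIV :: nat set)}"
      then obtain k :: nat where "y = x [^] (k mod m)"
        using pow_mod_eq[OF assms(1,2)] by blast
      then show "y \<in> (\<lambda>i. x [^] i) ` {..<m}"
        using assms(3) by simp
    qed
  qed blast
  finally show ?thesis .
qed

lemma prime_card_subgroup_eq_generate:
  assumes p: "Factorial_Ring.prime p" and P: "subgroup P G" "card P = p"
    and z: "z \<in> P" "z \<noteq> \<one>"
  shows "P = generate G {z}"
proof -
  have zc: "z \<in> carrier G" using subgroup.mem_carrier[OF P(1) z(1)] .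
  have fin: "finite P" using P(2) prime_gt_0_nat[OF p] card_ge_0_finite by blast
  have sub: "generate G {z} \<subseteq> P"
    using generate_subgroup_incl[of "{z}" P] P(1) z(1) by simp
  have "card (generate G {z}) dvd p"
    using card_subgroup_dvd_card[OF P(1) generate_is_subgroup sub fin] zc P(2) by simp
  moreover have "card (generate G {z}) \<noteq> 1"
    using generate_pow_card[OF zc] ord_eq_1[OF zc] z(2) by simp
  ultimately have "card (generate G {z}) = p"
    using p prime_nat_iff by blast
  then show ?thesis using card_subset_eq[OF fin sub] P(2) by simp
qed

lemma card_generate_prime_pow_eq_one:
  assumes p: "Factorial_Ring.prime p" and x: "x \<in> carrier G" "x \<noteq> \<one>" "x [^] p = \<one>"
  shows "card (generate G {x}) = p"
proof -
  have "ord x dvd p" "ord x \<noteq> 1"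
    using pow_eq_id ord_eq_1 x by auto
  then show ?thesis
    using p prime_nat_iff generate_pow_card[OF x(1)] by metis
qed

lemma prime_square_dvd_order_if_commuting:
  assumes p: "Factorial_Ring.prime p"
    and q: "q \<in> carrier G" "q \<noteq> \<one>" "q [^] p = \<one>"
    and z: "z \<in> carrier G" "z [^] p = \<one>" "z \<notin> generate G {q}"
    and comm: "q \<otimes> z = z \<otimes> q"
  shows "p ^ 2 dvd order G"
proof -
  define Q Z where "Q = generate G {q}" and "Z = generate G {z}"
  have "\<one> \<in> Q" unfolding Q_def by (rule generate.one)
  then have "z \<noteq> \<one>" using z(3) unfolding Q_def by blast
  have subgroups: "subgroup Q G" "subgroup Z G"
    unfolding Q_def Z_def using q(1) z(1) generate_is_subgroup by auto
  have cards: "card Q = p" "card Z = p"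
    unfolding Q_def Z_def using card_generate_prime_pow_eq_one p q z \<open>z \<noteq> \<one>\<close> by auto
  have Q_pows: "Q = (\<lambda>i. q [^] i) ` {..<p}" and Z_pows: "Z = (\<lambda>j. z [^] j) ` {..<p}"
    unfolding Q_def Z_def using generate_singleton_eq_pows prime_gt_0_nat[OF p] q z by auto
  have commute: "x \<otimes> y = y \<otimes> x" if x: "x \<in> Q" and y: "y \<in> Z" for x y
  proof -
    obtain i j :: nat where ij: "x = q [^] i" "y = z [^] j"
      using x y unfolding Q_pows Z_pows by blast
    have "z \<otimes> q [^] i = q [^] i \<otimes> z"
      using group_commutes_pow[OF comm q(1) z(1)] by simp
    then have "z [^] j \<otimes> q [^] i = q [^] i \<otimes> z [^] j"
      using group_commutes_pow[OF _ z(1) nat_pow_closed[OF q(1)]] by simp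
    then show ?thesis
      using ij by simp
  qed
  have trivial_meet: "Q \<inter> Z = {\<one>}"
  proof (rule ccontr)
    assume "Q \<inter> Z \<noteq> {\<one>}"
    then obtain w where w: "w \<in> Q" "w \<in> Z" "w \<noteq> \<one>"
      using \<open>\<one> \<in> Q\<close> subgroup.one_closed[OF subgroups(2)] by blast
    have "Z = generate G {w}"
      using prime_card_subgroup_eq_generate[OF p subgroups(2) cards(2) w(2,3)] .
    also have "\<dots> \<subseteq> Q"
      using generate_subgroup_incl[OF _ subgroups(1)] w(1) by blast
    finally show False
      using z(3) generate.incl[of z "{z}" G] unfolding Q_def Z_def by blast
  qed
  define H where "H = (\<lambda>(x, y). x \<otimes> y) ` (Q \<times> Z)"
  have Q_carrier: "Q \<subseteq> carrier G" and Z_carrier: "Z \<subseteq> carrier G"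
    using subgroups subgroup.subset by auto
  have "inj_on (\<lambda>(x, y). x \<otimes> y) (Q \<times> Z)"
  proof (rule inj_onI, clarify)
    fix x y x' y' assume xy: "x \<in> Q" "y \<in> Z" "x' \<in> Q" "y' \<in> Z" "x \<otimes> y = x' \<otimes> y'"
    have c: "x \<in> carrier G" "y \<in> carrier G" "x' \<in> carrier G" "y' \<in> carrier G"
      using xy Q_carrier Z_carrier by auto
    have "inv x' \<otimes> x = inv x' \<otimes> (x \<otimes> y) \<otimes> inv y"
      using c by (simp add: m_assoc)
    also have "\<dots> = y' \<otimes> inv y"
      using c by (simp add: xy(5) m_assoc[symmetric])
    finally have "inv x' \<otimes> x = y' \<otimes> inv y" .
    moreover have "inv x' \<otimes> x \<in> Q" "y' \<otimes> inv y \<in> Z"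
      using xy subgroups by (auto intro: subgroup.m_closed subgroup.m_inv_closed)
    ultimately have "inv x' \<otimes> x = \<one>" "y' \<otimes> inv y = \<one>"
      using trivial_meet by auto
    then show "x = x' \<and> y = y'"
      using c l_cancel[of "inv x'" x x'] inv_equality[of y' "inv y"] by simp
  qed
  then have "card H = p ^ 2"
    unfolding H_def using cards by (simp add: card_image card_cartesian_product power2_eq_square)
  moreover have "subgroup H G"
  proof (rule subgroupI)
    show "H \<subseteq> carrier G"
      unfolding H_def using Q_carrier Z_carrier by auto
    show "H \<noteq> {}"
      unfolding H_def using \<open>\<one> \<in> Q\<close> subgroup.one_closed[OF subgroups(2)] by blast
  next
    fix h assume "h \<in> H"
    then obtain x y where xy: "x \<in> Q" "y \<in> Z" "h = x \<otimes> y" unfolding H_def by auto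
    have inv_in: "inv x \<in> Q" "inv y \<in> Z"
      using xy subgroups by (auto intro: subgroup.m_inv_closed)
    have "inv h = inv x \<otimes> inv y"
      using xy commute[OF inv_in] Q_carrier Z_carrier by (simp add: inv_mult_group subsetD)
    then show "inv h \<in> H"
      unfolding H_def using inv_in by (auto intro!: image_eqI[of _ _ "(inv x, inv y)"])
  next
    fix h h' assume "h \<in> H" "h' \<in> H"
    then obtain x y x' y' where xy: "x \<in> Q" "y \<in> Z" "h = x \<otimes> y" "x' \<in> Q" "y' \<in> Z" "h' = x' \<otimes> y'"
      unfolding H_def by auto
    have c: "x \<in> carrier G" "y \<in> carrier G" "x' \<in> carrier G" "y' \<in> carrier G"
      using xy Q_carrier Z_carrier by auto
    have "h \<otimes> h' = x \<otimes> (y \<otimes> x') \<otimes> y'"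
      using xy c by (simp add: m_assoc)
    also have "\<dots> = x \<otimes> (x' \<otimes> y) \<otimes> y'"
      using commute[OF xy(4,2)] by simp
    also have "\<dots> = (x \<otimes> x') \<otimes> (y \<otimes> y')"
      using c by (simp add: m_assoc)
    finally show "h \<otimes> h' \<in> H"
      unfolding H_def using xy subgroups
      by (auto intro!: image_eqI[of _ _ "(x \<otimes> x', y \<otimes> y')"] subgroup.m_closed)
  qed
  ultimately show ?thesis
    using card_subgroup_dvd_order by metis
qed

abbreviation conj_by :: "'a \<Rightarrow> 'a \<Rightarrow> 'a" where
  "conj_by g \<equiv> \<lambda>h \<in> carrier G. g \<otimes> h \<otimes> inv g"

abbreviation set_conj_by :: "'a \<Rightarrow> 'a set \<Rightarrow> 'a set" where
  "set_conj_by g \<equiv> \<lambda>H \<in> {H. H \<subseteq> carrier G}. g <# H #> inv g"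

lemma set_conj_by_eq_image:
  assumes "H \<subseteq> carrier G" "g \<in> carrier G"
  shows "set_conj_by g H = (\<lambda>h. g \<otimes> h \<otimes> inv g) ` H"
  using assms by (auto simp: l_coset_def r_coset_def image_iff subsetD)

lemma conj_by_fixed_iff_commute:
  assumes "g \<in> carrier G" "h \<in> carrier G"
  shows "conj_by g h = h \<longleftrightarrow> g \<otimes> h = h \<otimes> g"
  using assms inv_solve_right[of h "g \<otimes> h" g] by auto

lemma prime_subgroup_eq_if_normalized:
  assumes fin: "finite (carrier G)" and p: "Factorial_Ring.prime p" and not_sq: "\<not> p ^ 2 dvd order G"
    and P: "subgroup P G" "card P = p" and R: "subgroup R G" "card R = p"
    and q: "q \<in> P" "q \<noteq> \<one>" and normalizes: "(\<lambda>h. q \<otimes> h \<otimes> inv q) ` R \<subseteq> R"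
  shows "R = P"
proof -
  interpret conj: group_action G "carrier G" conj_by
    by (rule action_by_conjugation)
  have R_carrier: "R \<subseteq> carrier G" using subgroup.subset[OF R(1)] .
  have finite_R: "finite R" using R_carrier fin finite_subset by blast
  have q_carrier: "q \<in> carrier G" using subgroup.mem_carrier[OF P(1) q(1)] .
  have "finite P"
    using P(2) prime_gt_0_nat[OF p] card_ge_0_finite by blast
  then have q_pow: "q [^] p = \<one>"
    using subgroup_pow_card_eq_one[OF P(1) _ q(1)] P(2) by simp
  have "conj_by q ` R \<subseteq> R"
    using normalizes R_carrier by (auto simp: subsetD)
  define Fix where "Fix = {x \<in> R. conj_by q x = x}"
  have "card R mod p = card Fix mod p"
    unfolding Fix_def
    by (rule conj.card_mod_prime_eq_card_fixed_points[OF p q_carrier q_pow finite_R R_carrier]) fact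
  then have "p dvd card Fix"
    using R(2) by (simp add: mod_eq_0_iff_dvd)
  moreover have "card Fix > 0"
    unfolding Fix_def using subgroup.one_closed[OF R(1)] q_carrier finite_R
    by (auto simp: card_gt_0_iff)
  ultimately have "p \<le> card Fix"
    by (rule dvd_imp_le)
  then have "\<not> Fix \<subseteq> {\<one>}"
    using prime_ge_2_nat[OF p] card_mono[of "{\<one>}" Fix] by fastforce
  then obtain z where z: "z \<in> Fix" "z \<noteq> \<one>"
    by blast
  have z_carrier: "z \<in> carrier G" and "z \<in> R"
    using z(1) R_carrier unfolding Fix_def by auto
  have comm: "q \<otimes> z = z \<otimes> q"
    using z(1) conj_by_fixed_iff_commute[OF q_carrier z_carrier] unfolding Fix_def by simp
  have "z \<in> generate G {q}"
    using prime_square_dvd_order_if_commuting[OF p q_carrier q(2) q_pow z_carrier _ _ comm] not_sq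
      subgroup_pow_card_eq_one[OF R(1) finite_R \<open>z \<in> R\<close>] R(2) by blast
  then have "z \<in> P"
    using prime_card_subgroup_eq_generate[OF p P q] by simp
  then show ?thesis
    using prime_card_subgroup_eq_generate[OF p P \<open>z \<in> P\<close> z(2)]
      prime_card_subgroup_eq_generate[OF p R \<open>z \<in> R\<close> z(2)] by simp
qed

lemma conjugate_subgroup:
  assumes "subgroup P G" "g \<in> carrier G"
  shows "subgroup (set_conj_by g P) G" "card (set_conj_by g P) = card P"
proof -
  have P_carrier: "P \<subseteq> carrier G" using subgroup.subset[OF assms(1)] .
  show "subgroup (set_conj_by g P) G"
    using subgroup_conjugation_is_surj2[OF assms(2,1)] P_carrier by simp
  have "inj_on (\<lambda>h. g \<otimes> h \<otimes> inv g) P"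
    using conjugation_is_inj[OF assms(2)] P_carrier by (auto simp: inj_on_def subsetD)
  then show "card (set_conj_by g P) = card P"
    using set_conj_by_eq_image[OF P_carrier assms(2)] by (simp add: card_image)
qed

lemma subgroup_in_conjugates:
  assumes "subgroup P G" "R \<in> orbit G set_conj_by P"
  shows "subgroup R G" "card R = card P"
  using assms conjugate_subgroup unfolding orbit_def by auto

lemma set_conj_by_subgroup_self:
  assumes "subgroup P G" "q \<in> P"
  shows "set_conj_by q P = P"
proof -
  have P_carrier: "P \<subseteq> carrier G" using subgroup.subset[OF assms(1)] .
  have q_carrier: "q \<in> carrier G" using assms P_carrier by auto
  have "(\<lambda>h. q \<otimes> h \<otimes> inv q) ` P = P"
  proof
    show "(\<lambda>h. q \<otimes> h \<otimes> inv q) ` P \<subseteq> P"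
      using assms by (auto intro: subgroup.m_closed subgroup.m_inv_closed)
    show "P \<subseteq> (\<lambda>h. q \<otimes> h \<otimes> inv q) ` P"
    proof
      fix h assume h: "h \<in> P"
      then have "inv q \<otimes> h \<otimes> q \<in> P"
        using assms by (auto intro: subgroup.m_closed subgroup.m_inv_closed)
      moreover have "h = q \<otimes> (inv q \<otimes> h \<otimes> q) \<otimes> inv q"
        using q_carrier h P_carrier by (simp add: m_assoc subsetD)
      ultimately show "h \<in> (\<lambda>h. q \<otimes> h \<otimes> inv q) ` P" by blast
    qed
  qed
  then show ?thesis
    using set_conj_by_eq_image[OF P_carrier q_carrier] by simp
qed

lemma card_conjugates_prime_subgroup_mod:
  assumes fin: "finite (carrier G)" and p: "Factorial_Ring.prime p" and not_sq: "\<not> p ^ 2 dvd order G"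
    and P: "subgroup P G" "card P = p"
  shows "card (orbit G set_conj_by P) mod p = 1"
proof -
  interpret conj: group_action G "{H. H \<subseteq> carrier G}" set_conj_by
    by (rule action_by_conjugation_on_power_set)
  define Orb where "Orb = orbit G set_conj_by P"
  have P_carrier: "P \<subseteq> carrier G" using subgroup.subset[OF P(1)] .
  have Orb_conj: "R \<in> Orb \<longleftrightarrow> (\<exists>g \<in> carrier G. R = set_conj_by g P)" for R
    unfolding Orb_def orbit_def by blast
  have Orb_subgroups: "subgroup R G" "card R = p" if "R \<in> Orb" for R
    using subgroup_in_conjugates[OF P(1)] that P(2) unfolding Orb_def by auto
  have Orb_sets: "Orb \<subseteq> {H. H \<subseteq> carrier G}"
    using Orb_subgroups subgroup.subset by blast
  have finite_P: "finite P"
    using fin P_carrier finite_subset by blast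
  have "\<not> P \<subseteq> {\<one>}"
    using P(2) prime_ge_2_nat[OF p] card_mono[of "{\<one>}" P] by fastforce
  then obtain q where q: "q \<in> P" "q \<noteq> \<one>"
    by blast
  have q_carrier: "q \<in> carrier G" using subgroup.mem_carrier[OF P(1) q(1)] .
  have q_pow: "q [^] p = \<one>"
    using subgroup_pow_card_eq_one[OF P(1) finite_P q(1)] P(2) by simp
  have invariant: "set_conj_by q ` Orb \<subseteq> Orb"
  proof
    fix S assume "S \<in> set_conj_by q ` Orb"
    then obtain R where "R \<in> Orb" "S = set_conj_by q R"
      by (auto simp only: image_iff)
    then obtain g where g: "g \<in> carrier G" "S = set_conj_by q (set_conj_by g P)"
      using Orb_conj by auto
    then have "S = set_conj_by (q \<otimes> g) P"
      using conj.composition_rule[of P q g] P_carrier q_carrier by simp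
    then show "S \<in> Orb"
      unfolding Orb_conj using g(1) q_carrier by blast
  qed
  have "{R \<in> Orb. set_conj_by q R = R} = {P}"
  proof
    have "P \<in> Orb"
      using conj.orbit_refl P_carrier unfolding Orb_def by blast
    moreover have "set_conj_by q P = P"
      using set_conj_by_subgroup_self[OF P(1) q(1)] .
    ultimately show "{P} \<subseteq> {R \<in> Orb. set_conj_by q R = R}" by blast
    show "{R \<in> Orb. set_conj_by q R = R} \<subseteq> {P}"
    proof clarify
      fix R assume R: "R \<in> Orb" "set_conj_by q R = R"
      have "R \<subseteq> carrier G"
        using R(1) Orb_sets by blast
      then have "(\<lambda>h. q \<otimes> h \<otimes> inv q) ` R \<subseteq> R"
        using R(2) set_conj_by_eq_image q_carrier by simp
      then show "R = P"
        using prime_subgroup_eq_if_normalized[OF fin p not_sq P Orb_subgroups[OF R(1)] q] by simp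
    qed
  qed
  moreover have "finite Orb"
    using Orb_sets fin by (simp add: finite_subset)
  ultimately show ?thesis
    using conj.card_mod_prime_eq_card_fixed_points[OF p q_carrier q_pow _ Orb_sets invariant]
      prime_gt_1_nat[OF p] unfolding Orb_def by simp
qed

lemma order80_sylow5_conjugates:
  assumes fin: "finite (carrier G)" and order: "order G = 80"
    and P: "subgroup P G" "card P = 5" and not_normal: "\<not> P \<lhd> G"
  shows "card (orbit G set_conj_by P) = 16" "normalizer G P = P"
proof -
  interpret conj: group_action G "{H. H \<subseteq> carrier G}" set_conj_by
    by (rule action_by_conjugation_on_power_set)
  define Orb N where "Orb = orbit G set_conj_by P" and "N = normalizer G P"
  have P_carrier: "P \<subseteq> carrier G" using subgroup.subset[OF P(1)] .
  have N_stabilizer: "N = stabilizer G set_conj_by P"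
    unfolding N_def normalizer_def by simp
  have orbit_stabilizer: "card Orb * card N = 80"
    using conj.orbit_stabilizer_theorem[of P] P_carrier order unfolding Orb_def N_stabilizer by simp
  have N_subgroup: "subgroup N G"
    unfolding N_def using normalizer_imp_subgroup[OF P_carrier] .
  have "P \<subseteq> N"
    unfolding N_stabilizer stabilizer_def using set_conj_by_subgroup_self[OF P(1)] P_carrier by auto
  moreover have finite_N: "finite N"
    using subgroup.subset[OF N_subgroup] fin finite_subset by blast
  ultimately have "5 dvd card N"
    using card_subgroup_dvd_card[OF N_subgroup P(1)] P(2) by simp
  then obtain k where "card N = 5 * k" ..
  then have "k * card Orb = 16"
    using orbit_stabilizer by simp
  then have "card Orb dvd 16"
    by (metis dvd_triv_right)
  moreover have "card Orb mod 5 = 1"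
    using card_conjugates_prime_subgroup_mod[OF fin _ _ P] order unfolding Orb_def by simp
  ultimately have "card Orb = 1 \<or> card Orb = 16"
    using dvd_16_cases[of "card Orb"] by auto
  moreover have "card Orb \<noteq> 1"
  proof
    assume "card Orb = 1"
    moreover have "P \<in> Orb"
      using conj.orbit_refl P_carrier unfolding Orb_def by blast
    ultimately have "Orb = {P}"
      by (metis card_1_singletonE singletonD)
    then have "set_conj_by g P = P" if "g \<in> carrier G" for g
      using that unfolding Orb_def orbit_def by blast
    then have "\<forall>g\<in>carrier G. \<forall>h\<in>P. g \<otimes> h \<otimes> inv g \<in> P"
      using set_conj_by_eq_image[OF P_carrier] by blast
    then show False
      using not_normal normal_inv_iff P(1) by blast
  qed
  ultimately show "card Orb = 16" unfolding Orb_def by blast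
  then have "card N = 5"
    using orbit_stabilizer by simp
  then show "N = P"
    using card_subset_eq[OF finite_N \<open>P \<subseteq> N\<close>] P(2) by simp
qed

lemma order80_sylow2_union_conjugates:
  assumes fin: "finite (carrier G)" and order: "order G = 80"
    and P: "subgroup P G" "card P = 5" and not_normal: "\<not> P \<lhd> G"
    and T: "subgroup T G" "card T = 16"
  shows "carrier G - T \<subseteq> \<Union> (orbit G set_conj_by P)"
proof -
  define Orb where "Orb = orbit G set_conj_by P"
  have Orb_subgroups: "subgroup R G" "card R = 5" if "R \<in> Orb" for R
    using subgroup_in_conjugates[OF P(1)] that P(2) unfolding Orb_def by auto
  have finite_subgroup: "finite H" if "subgroup H G" for H
    using that subgroup.subset fin finite_subset by blast
  have card_Orb: "card Orb = 16"
    using order80_sylow5_conjugates(1)[OF fin order P not_normal] unfolding Orb_def .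
  then have finite_Orb: "finite Orb"
    by (metis card.infinite zero_neq_numeral)
  define U where "U = (\<Union>R\<in>Orb. R - {\<one>})"
  have "card U = (\<Sum>R\<in>Orb. card (R - {\<one>}))"
    unfolding U_def
  proof (rule card_UN_disjoint[OF finite_Orb])
    show "\<forall>R\<in>Orb. finite (R - {\<one>})"
      using Orb_subgroups(1) finite_subgroup by blast
    show "\<forall>R\<in>Orb. \<forall>R'\<in>Orb. R \<noteq> R' \<longrightarrow> (R - {\<one>}) \<inter> (R' - {\<one>}) = {}"
    proof (intro ballI impI)
      fix R R' assume R: "R \<in> Orb" "R' \<in> Orb" "R \<noteq> R'"
      have "R = generate G {z}" "R' = generate G {z}" if "z \<in> R" "z \<in> R'" "z \<noteq> \<one>" for z
        using prime_card_subgroup_eq_generate[OF _ Orb_subgroups[OF R(1)]]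
          prime_card_subgroup_eq_generate[OF _ Orb_subgroups[OF R(2)]] that by auto
      then show "(R - {\<one>}) \<inter> (R' - {\<one>}) = {}"
        using R(3) by blast
    qed
  qed
  also have "\<dots> = 16 * 4"
    using Orb_subgroups card_Orb by (simp add: card_Diff_singleton subgroup.one_closed)
  finally have card_U: "card U = 64" by simp
  have "T \<inter> U = {}"
  proof (rule ccontr)
    assume "T \<inter> U \<noteq> {}"
    then obtain R x where x: "x \<in> T" "R \<in> Orb" "x \<in> R" "x \<noteq> \<one>"
      unfolding U_def by blast
    have "x [^] (16::nat) = \<one>" "x [^] (5::nat) = \<one>"
      using subgroup_pow_card_eq_one[OF T(1) _ x(1)] subgroup_pow_card_eq_one[OF Orb_subgroups(1)[OF x(2)] _ x(3)]
        T Orb_subgroups[OF x(2)] finite_subgroup by auto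
    then show False
      using eq_one_if_coprime_pows[of x 5 16] prime_imp_coprime[of "5::nat" 16] x
        subgroup.mem_carrier[OF T(1)] by simp
  qed
  moreover have "T \<subseteq> carrier G" "U \<subseteq> carrier G"
    using subgroup.subset T(1) Orb_subgroups(1) unfolding U_def by blast+
  moreover have "finite T" "finite U"
    using \<open>T \<subseteq> carrier G\<close> \<open>U \<subseteq> carrier G\<close> fin finite_subset by blast+
  ultimately have "card (T \<union> U) = card (carrier G)"
    using card_U T(2) order by (simp add: card_Un_disjoint order_def)
  then have "T \<union> U = carrier G"
    using card_subset_eq[OF fin] \<open>T \<subseteq> carrier G\<close> \<open>U \<subseteq> carrier G\<close> by (metis Un_least)
  then show ?thesis
    unfolding U_def Orb_def by blast
qed

lemma order80_structure:
  assumes fin: "finite (carrier G)" and order: "order G = 80"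
    and no_normal_sylow5: "\<forall>P. sylow_subgroup G 5 P \<longrightarrow> \<not> P \<lhd> G"
  obtains T where "T \<lhd> G" "card T = 16"
    "\<forall>x \<in> carrier G - T. x [^] (5::nat) = \<one>"
    "\<forall>x \<in> carrier G - T. \<forall>t \<in> T. t \<otimes> x = x \<otimes> t \<longrightarrow> t = \<one>"
proof -
  have "multiplicity 5 (80::nat) = 1"
    by (rule multiplicity_eqI) simp_all
  then have sylow5: "sylow_subgroup G 5 R \<longleftrightarrow> subgroup R G \<and> card R = 5" for R
    unfolding sylow_subgroup_def using order by simp
  obtain P where P: "subgroup P G" "card P = 5"
    using sylow_thm[of 5 G 1 16] is_group order fin by auto
  obtain T where T: "subgroup T G" "card T = 16"
    using sylow_thm[of 2 G 4 5] is_group order fin by auto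
  have finite_subgroup: "finite H" if "subgroup H G" for H
    using that subgroup.subset fin finite_subset by blast
  have coprime_pows: "x = \<one>" if "x \<in> carrier G" "x [^] (5::nat) = \<one>" "x [^] (16::nat) = \<one>" for x
    using eq_one_if_coprime_pows[OF that] prime_imp_coprime[of "5::nat" 16] by simp
  have outside_T: "\<exists>R. subgroup R G \<and> card R = 5 \<and> x \<in> R" if x: "x \<in> carrier G - T" for x
  proof -
    have "\<not> P \<lhd> G"
      using no_normal_sylow5 sylow5 P by blast
    then obtain R where "R \<in> orbit G set_conj_by P" "x \<in> R"
      using order80_sylow2_union_conjugates[OF fin order P _ T] x by blast
    then show ?thesis
      using subgroup_in_conjugates[OF P(1)] P(2) by auto
  qed
  have pow5: "\<forall>x \<in> carrier G - T. x [^] (5::nat) = \<one>"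
  proof
    fix x assume "x \<in> carrier G - T"
    then obtain R where R: "subgroup R G" "card R = 5" "x \<in> R"
      using outside_T by blast
    then show "x [^] (5::nat) = \<one>"
      using subgroup_pow_card_eq_one[OF R(1) finite_subgroup[OF R(1)] R(3)] by simp
  qed
  have fixpoint_free: "\<forall>x \<in> carrier G - T. \<forall>t \<in> T. t \<otimes> x = x \<otimes> t \<longrightarrow> t = \<one>"
  proof (intro ballI impI)
    fix x t assume x: "x \<in> carrier G - T" and t: "t \<in> T" and comm: "t \<otimes> x = x \<otimes> t"
    obtain R where R: "subgroup R G" "card R = 5" "x \<in> R"
      using outside_T[OF x] by blast
    have t_carrier: "t \<in> carrier G" using subgroup.mem_carrier[OF T(1) t] .
    have "x \<noteq> \<one>" using x subgroup.one_closed[OF T(1)] by blast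
    then have R_pows: "R = (\<lambda>i. x [^] i) ` {..<5::nat}"
      using prime_card_subgroup_eq_generate[OF _ R] generate_singleton_eq_pows x pow5 by auto
    have "(\<lambda>h. t \<otimes> h \<otimes> inv t) ` R = R"
    proof -
      have "t \<otimes> x [^] i \<otimes> inv t = x [^] i" for i :: nat
      proof -
        have "t \<otimes> x [^] i = x [^] i \<otimes> t"
          using group_commutes_pow[of x t i] comm x t_carrier by simp
        then have "t \<otimes> x [^] i \<otimes> inv t = x [^] i \<otimes> t \<otimes> inv t"
          by simp
        also have "\<dots> = x [^] i"
          using x t_carrier by (simp add: m_assoc)
        finally show ?thesis .
      qed
      then show ?thesis
        unfolding R_pows by (simp add: image_image)
    qed
    then have "set_conj_by t R = R"
      using set_conj_by_eq_image[OF subgroup.subset[OF R(1)] t_carrier] by simp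
    then have "t \<in> normalizer G R"
      unfolding normalizer_def stabilizer_def using t_carrier by blast
    moreover have "\<not> R \<lhd> G"
      using no_normal_sylow5 sylow5 R(1,2) by blast
    ultimately have "t \<in> R"
      using order80_sylow5_conjugates(2)[OF fin order R(1,2)] by simp
    then have "t [^] (5::nat) = \<one>"
      using subgroup_pow_card_eq_one[OF R(1) finite_subgroup[OF R(1)]] R(2) by simp
    moreover have "t [^] (16::nat) = \<one>"
      using subgroup_pow_card_eq_one[OF T(1) finite_subgroup[OF T(1)] t] T(2) by simp
    ultimately show "t = \<one>"
      using coprime_pows t_carrier by simp
  qed
  have "T \<lhd> G"
    unfolding normal_inv_iff
  proof (intro conjI ballI T(1))
    fix g t assume g: "g \<in> carrier G" and t: "t \<in> T"
    have conj_T: "subgroup (set_conj_by g T) G" "card (set_conj_by g T) = 16"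
      using conjugate_subgroup[OF T(1) g] T(2) by auto
    moreover have "g \<otimes> t \<otimes> inv g \<in> set_conj_by g T"
      using set_conj_by_eq_image[OF subgroup.subset[OF T(1)] g] t by simp
    ultimately have pow16: "(g \<otimes> t \<otimes> inv g) [^] (16::nat) = \<one>"
      using subgroup_pow_card_eq_one[OF conj_T(1) finite_subgroup[OF conj_T(1)]] by simp
    have "g \<otimes> t \<otimes> inv g \<in> carrier G"
      using g t subgroup.mem_carrier[OF T(1)] by simp
    show "g \<otimes> t \<otimes> inv g \<in> T"
    proof (rule ccontr)
      assume "g \<otimes> t \<otimes> inv g \<notin> T"
      then have "g \<otimes> t \<otimes> inv g = \<one>"
        using pow5 coprime_pows pow16 \<open>g \<otimes> t \<otimes> inv g \<in> carrier G\<close> by blast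
      then show False
        using \<open>g \<otimes> t \<otimes> inv g \<notin> T\<close> subgroup.one_closed[OF T(1)] by simp
    qed
  qed
  then show ?thesis
    using that T(2) pow5 fixpoint_free by blast
qed

end

locale frobenius80 = group +
  fixes T :: "'a set" and a :: 'a
  assumes finite_carrier: "finite (carrier G)" and order: "order G = 80"
    and T_normal: "T \<lhd> G" and card_T: "card T = 16"
    and pow5_outside: "\<forall>x \<in> carrier G - T. x [^] (5::nat) = \<one>"
    and fixpoint_free: "\<forall>x \<in> carrier G - T. \<forall>t \<in> T. t \<otimes> x = x \<otimes> t \<longrightarrow> t = \<one>"
    and a_carrier: "a \<in> carrier G" and a_notin_T: "a \<notin> T"
begin

interpretation conj: group_action G "carrier G" conj_by
  by (rule action_by_conjugation)

definition \<sigma> :: "'a \<Rightarrow> 'a" where "\<sigma> t = a \<otimes> t \<otimes> inv a"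

lemma conj_by_a: "t \<in> carrier G \<Longrightarrow> conj_by a t = \<sigma> t"
  unfolding \<sigma>_def by simp

lemma T_subgroup: "subgroup T G"
  using T_normal normal_imp_subgroup by blast

lemma T_carrier: "t \<in> T \<Longrightarrow> t \<in> carrier G"
  using subgroup.mem_carrier[OF T_subgroup] .

lemma finite_T: "finite T"
  using card_T card.infinite by fastforce

lemma T_ne_one: "T \<noteq> {\<one>}"
  using card_T by auto

lemma a_pow5: "a [^] (5::nat) = \<one>"
  using pow5_outside a_carrier a_notin_T by blast

lemma sigma_closed: "t \<in> T \<Longrightarrow> \<sigma> t \<in> T"
  using T_normal a_carrier unfolding normal_inv_iff \<sigma>_def by blast

lemma sigma_fixed_eq_one:
  assumes "t \<in> T" "\<sigma> t = t"
  shows "t = \<one>"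
proof -
  have "a \<otimes> t = t \<otimes> a"
    using assms conj_by_fixed_iff_commute[OF a_carrier T_carrier] conj_by_a T_carrier by simp
  then show ?thesis
    using fixpoint_free a_carrier a_notin_T assms(1) by auto
qed

lemma funpow_sigma: "x \<in> carrier G \<Longrightarrow> (\<sigma> ^^ k) x = a [^] k \<otimes> x \<otimes> inv (a [^] k)"
proof (induction k)
  case (Suc k)
  have "(\<sigma> ^^ Suc k) x = (a \<otimes> a [^] k) \<otimes> x \<otimes> (inv (a [^] k) \<otimes> inv a)"
    using Suc a_carrier unfolding \<sigma>_def by (simp add: m_assoc)
  then show ?case
    by (simp only: nat_pow_Suc2[OF a_carrier] inv_mult_group[OF a_carrier nat_pow_closed[OF a_carrier]])
qed simp

lemma funpow5_sigma: "x \<in> carrier G \<Longrightarrow> (\<sigma> ^^ 5) x = x"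
  using funpow_sigma a_pow5 by simp

lemma invariant_subgroup_trivial_or_T:
  assumes H: "subgroup H G" "H \<subseteq> T" and invariant: "\<sigma> ` H \<subseteq> H"
  shows "H = {\<one>} \<or> H = T"
proof -
  have finite_H: "finite H" using finite_subset[OF H(2) finite_T] .
  have fixed: "{x \<in> H. \<sigma> x = x} = {\<one>}"
  proof
    show "{x \<in> H. \<sigma> x = x} \<subseteq> {\<one>}"
      using sigma_fixed_eq_one H(2) by blast
    show "{\<one>} \<subseteq> {x \<in> H. \<sigma> x = x}"
      using subgroup.one_closed[OF H(1)] a_carrier unfolding \<sigma>_def by simp
  qed
  have H_carrier: "H \<subseteq> carrier G" using subgroup.subset[OF H(1)] .
  then have "conj_by a ` H \<subseteq> H"
    using invariant conj_by_a by (auto simp del: restrict_apply)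
  then have "card H mod 5 = card {x \<in> H. conj_by a x = x} mod 5"
    using conj.card_mod_prime_eq_card_fixed_points[OF _ a_carrier a_pow5 finite_H H_carrier] by simp
  also have "{x \<in> H. conj_by a x = x} = {x \<in> H. \<sigma> x = x}"
    using H_carrier conj_by_a by (auto simp del: restrict_apply)
  finally have "card H mod 5 = card {x \<in> H. \<sigma> x = x} mod 5" .
  then have "card H mod 5 = 1"
    using fixed by simp
  moreover have "card H dvd 16"
    using card_subgroup_dvd_card[OF T_subgroup H(1) H(2) finite_T] card_T by simp
  ultimately have "card H = 1 \<or> card H = 16"
    using dvd_16_cases[of "card H"] by auto
  then show ?thesis
  proof
    assume "card H = 1"
    then obtain x where "H = {x}" by (rule card_1_singletonE)
    then show ?thesis using subgroup.one_closed[OF H(1)] by simp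
  next
    assume "card H = 16"
    then show ?thesis using card_subset_eq[OF finite_T H(2)] card_T by simp
  qed
qed

lemma conj_class_card_10_if_noncentral:
  assumes t: "t \<in> T" "t \<noteq> \<one>" and noncentral: "\<exists>s \<in> T. t \<otimes> s \<noteq> s \<otimes> t"
  shows "card (orbit G conj_by t) = 10" "orbit G conj_by t \<subseteq> T - {\<one>}"
proof -
  have t_carrier: "t \<in> carrier G" using T_carrier[OF t(1)] .
  define C where "C = stabilizer G conj_by t"
  have C_subgroup: "subgroup C G"
    unfolding C_def using conj.stabilizer_subgroup[OF t_carrier] .
  have "card (orbit G conj_by t) * card C = 80"
    using conj.orbit_stabilizer_theorem[OF t_carrier] order unfolding C_def by simp
  have commutes: "g \<otimes> t = t \<otimes> g" if "g \<in> C" for g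
    using that conj_by_fixed_iff_commute t_carrier unfolding C_def stabilizer_def by auto
  have "C \<subseteq> T"
  proof
    fix g assume g: "g \<in> C"
    show "g \<in> T"
    proof (rule ccontr)
      assume "g \<notin> T"
      moreover have "g \<in> carrier G"
        using g unfolding C_def stabilizer_def by simp
      ultimately show False
        using fixpoint_free t commutes[OF g] by auto
    qed
  qed
  then have "card C dvd 16"
    using card_subgroup_dvd_card[OF T_subgroup C_subgroup _ finite_T] card_T by simp
  moreover have "card C \<noteq> 16"
  proof
    assume "card C = 16"
    then have "C = T" using card_subset_eq[OF finite_T \<open>C \<subseteq> T\<close>] card_T by simp
    then show False using noncentral commutes by metis
  qed
  show orbit_sub: "orbit G conj_by t \<subseteq> T - {\<one>}"
  proof
    fix s assume "s \<in> orbit G conj_by t"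
    then obtain g where g: "g \<in> carrier G" "s = g \<otimes> t \<otimes> inv g"
      unfolding orbit_def using t_carrier by auto
    then have "s \<in> T"
      using T_normal normal_inv_iff t(1) by blast
    moreover have "s \<noteq> \<one>"
      using conjugation_is_inj[OF g(1) t_carrier one_closed] g t(2) by auto
    ultimately show "s \<in> T - {\<one>}" by simp
  qed
  then have "card (orbit G conj_by t) \<le> 15"
    using card_mono[OF _ orbit_sub] finite_T card_T subgroup.one_closed[OF T_subgroup]
    by (simp add: card_Diff_singleton)
  moreover have "card C = 1 \<or> card C = 2 \<or> card C = 4 \<or> card C = 8"
    using dvd_16_cases[OF \<open>card C dvd 16\<close>] \<open>card C \<noteq> 16\<close> by simp
  ultimately show "card (orbit G conj_by t) = 10"
    using \<open>card (orbit G conj_by t) * card C = 80\<close> by auto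
qed

lemma T_center_nontrivial: "\<exists>z \<in> T. z \<noteq> \<one> \<and> (\<forall>t \<in> T. z \<otimes> t = t \<otimes> z)"
proof (rule ccontr)
  assume "\<not> ?thesis"
  then have noncentral: "\<exists>s \<in> T. t \<otimes> s \<noteq> s \<otimes> t" if "t \<in> T" "t \<noteq> \<one>" for t
    using that by auto
  have card_T1: "card (T - {\<one>}) = 15"
    using card_T subgroup.one_closed[OF T_subgroup] by (simp add: card_Diff_singleton)
  obtain t1 where t1: "t1 \<in> T" "t1 \<noteq> \<one>"
    using T_ne_one subgroup.one_closed[OF T_subgroup] by blast
  note class1 = conj_class_card_10_if_noncentral[OF t1 noncentral[OF t1]]
  have finite_class: "finite (orbit G conj_by t)" if "orbit G conj_by t \<subseteq> T - {\<one>}" for t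
    using that finite_T finite_subset by blast
  have "\<not> T - {\<one>} \<subseteq> orbit G conj_by t1"
  proof
    assume "T - {\<one>} \<subseteq> orbit G conj_by t1"
    then have "card (T - {\<one>}) \<le> card (orbit G conj_by t1)"
      using card_mono[OF finite_class[OF class1(2)]] by blast
    then show False
      using class1(1) card_T1 by simp
  qed
  then obtain t2 where t2: "t2 \<in> T" "t2 \<noteq> \<one>" "t2 \<notin> orbit G conj_by t1"
    by blast
  note class2 = conj_class_card_10_if_noncentral[OF t2(1,2) noncentral[OF t2(1,2)]]
  have "orbit G conj_by t1 \<inter> orbit G conj_by t2 = {}"
  proof (rule ccontr)
    assume "orbit G conj_by t1 \<inter> orbit G conj_by t2 \<noteq> {}"
    then obtain s where s: "s \<in> orbit G conj_by t1" "s \<in> orbit G conj_by t2" by blast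
    have carriers: "s \<in> carrier G" "t1 \<in> carrier G" "t2 \<in> carrier G"
      using s(1) class1(2) t1(1) t2(1) T_carrier by auto
    have "t2 \<in> orbit G conj_by s"
      using conj.orbit_sym[OF carriers(3,1) s(2)] .
    then have "t2 \<in> orbit G conj_by t1"
      using conj.orbit_trans[OF carriers(2,1,3) s(1)] by blast
    then show False using t2(3) by simp
  qed
  then have "card (orbit G conj_by t1 \<union> orbit G conj_by t2) = 20"
    using class1 class2 finite_class by (simp add: card_Un_disjoint)
  moreover have "card (orbit G conj_by t1 \<union> orbit G conj_by t2) \<le> card (T - {\<one>})"
    using class1(2) class2(2) finite_T by (intro card_mono) auto
  ultimately show False
    using card_T1 by simp
qed

lemma sigma_mult:
  "x \<in> carrier G \<Longrightarrow> y \<in> carrier G \<Longrightarrow> \<sigma> (x \<otimes> y) = \<sigma> x \<otimes> \<sigma> y"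
  using a_carrier unfolding \<sigma>_def by (simp add: m_assoc)

lemma sigma_onto_T:
  assumes "t \<in> T"
  obtains s where "s \<in> T" "t = \<sigma> s"
proof
  have "inv a \<otimes> t \<otimes> inv (inv a) \<in> T"
    using T_normal inv_closed[OF a_carrier] assms unfolding normal_inv_iff by blast
  then show "inv a \<otimes> t \<otimes> a \<in> T"
    using a_carrier by simp
  show "t = \<sigma> (inv a \<otimes> t \<otimes> a)"
    using a_carrier T_carrier[OF assms] unfolding \<sigma>_def by (simp add: m_assoc)
qed

lemma T_abelian:
  assumes "s \<in> T" "t \<in> T"
  shows "s \<otimes> t = t \<otimes> s"
proof -
  define Z where "Z = T \<inter> (\<Inter>t \<in> T. stabilizer G conj_by t)"
  have Z_iff: "z \<in> Z \<longleftrightarrow> z \<in> T \<and> (\<forall>t \<in> T. z \<otimes> t = t \<otimes> z)" for z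
  proof -
    have "z \<in> stabilizer G conj_by t \<longleftrightarrow> z \<otimes> t = t \<otimes> z" if "z \<in> T" "t \<in> T" for t
      using conj_by_fixed_iff_commute[OF T_carrier T_carrier] T_carrier that
      unfolding stabilizer_def by auto
    then show ?thesis
      unfolding Z_def by blast
  qed
  have "Z \<subseteq> T"
    unfolding Z_def by blast
  have "subgroup (\<Inter>t \<in> T. stabilizer G conj_by t) G"
  proof (rule subgroups_Inter)
    show "subgroup H G" if "H \<in> (\<lambda>t. stabilizer G conj_by t) ` T" for H
      using that conj.stabilizer_subgroup T_carrier by blast
    show "(\<lambda>t. stabilizer G conj_by t) ` T \<noteq> {}"
      using subgroup.one_closed[OF T_subgroup] by blast
  qed
  then have Z_subgroup: "subgroup Z G"
    unfolding Z_def by (rule subgroups_Inter_pair[OF T_subgroup])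
  have Z_invariant: "\<sigma> ` Z \<subseteq> Z"
  proof
    fix w assume "w \<in> \<sigma> ` Z"
    then obtain z where z: "z \<in> Z" "w = \<sigma> z" by blast
    have "\<sigma> z \<otimes> t = t \<otimes> \<sigma> z" if t: "t \<in> T" for t
    proof -
      obtain s where s: "s \<in> T" "t = \<sigma> s" using sigma_onto_T[OF t] .
      have carrier: "z \<in> carrier G" "s \<in> carrier G"
        using z(1) s(1) Z_iff T_carrier by auto
      have "\<sigma> z \<otimes> t = \<sigma> (z \<otimes> s)"
        by (simp only: s(2) sigma_mult[OF carrier])
      also have "\<dots> = \<sigma> (s \<otimes> z)"
        using z(1) s(1) Z_iff by simp
      also have "\<dots> = t \<otimes> \<sigma> z"
        by (simp only: s(2) sigma_mult[OF carrier(2,1)])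
      finally show ?thesis .
    qed
    then show "w \<in> Z"
      using z Z_iff sigma_closed by auto
  qed
  obtain z where "z \<in> T" "z \<noteq> \<one>" "\<forall>t \<in> T. z \<otimes> t = t \<otimes> z"
    using T_center_nontrivial by blast
  then have "Z \<noteq> {\<one>}"
    using Z_iff by blast
  then have "Z = T"
    using invariant_subgroup_trivial_or_T[OF Z_subgroup \<open>Z \<subseteq> T\<close> Z_invariant] by blast
  then show ?thesis
    using Z_iff assms by blast
qed

lemma T_exponent2:
  assumes "t \<in> T"
  shows "t \<otimes> t = \<one>"
proof -
  define K where "K = {t \<in> T. t \<otimes> t = \<one>}"
  have "K \<subseteq> T"
    unfolding K_def by blast
  have K_subgroup: "subgroup K G"
  proof (rule subgroupI)
    show "K \<subseteq> carrier G" unfolding K_def using T_carrier by auto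
    show "K \<noteq> {}" unfolding K_def using subgroup.one_closed[OF T_subgroup] by auto
  next
    fix t assume "t \<in> K"
    then show "inv t \<in> K"
      unfolding K_def using inv_equality T_carrier by auto
  next
    fix s t assume "s \<in> K" "t \<in> K"
    then have st: "s \<in> T" "t \<in> T" "s \<otimes> s = \<one>" "t \<otimes> t = \<one>"
      unfolding K_def by auto
    then have carrier: "s \<in> carrier G" "t \<in> carrier G"
      using T_carrier by auto
    have "s \<otimes> t \<otimes> (s \<otimes> t) = s \<otimes> (t \<otimes> s) \<otimes> t"
      using carrier by (simp add: m_assoc)
    also have "\<dots> = (s \<otimes> s) \<otimes> (t \<otimes> t)"
      using T_abelian[OF st(2,1)] carrier by (simp add: m_assoc)
    finally show "s \<otimes> t \<in> K"
      unfolding K_def using st subgroup.m_closed[OF T_subgroup] by simp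
  qed
  have K_invariant: "\<sigma> ` K \<subseteq> K"
  proof
    fix w assume "w \<in> \<sigma> ` K"
    then obtain t where t: "t \<in> T" "t \<otimes> t = \<one>" "w = \<sigma> t"
      unfolding K_def by blast
    have "w \<otimes> w = \<sigma> (t \<otimes> t)"
      by (simp only: t(3) sigma_mult[OF T_carrier[OF t(1)] T_carrier[OF t(1)]])
    then show "w \<in> K"
      unfolding K_def using t sigma_closed a_carrier unfolding \<sigma>_def by simp
  qed
  obtain t where t: "t \<in> T" "t \<noteq> \<one>"
    using T_ne_one subgroup.one_closed[OF T_subgroup] by blast
  have t_carrier: "t \<in> carrier G" using T_carrier[OF t(1)] .
  have "ord t dvd 16" "ord t \<noteq> 1"
    using subgroup_pow_card_eq_one[OF T_subgroup finite_T t(1)] card_T pow_eq_id ord_eq_1 t t_carrier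
    by auto
  then have half: "ord t = 2 * (ord t div 2)" "0 < ord t div 2" "ord t div 2 < ord t"
    using dvd_16_cases[of "ord t"] by auto
  define u where "u = t [^] (ord t div 2)"
  have "u \<otimes> u = \<one>"
    unfolding u_def using nat_pow_mult[OF t_carrier] half(1) by (metis mult_2 pow_ord_eq_1[OF t_carrier])
  moreover have "u \<noteq> \<one>"
    unfolding u_def using pow_eq_id[OF t_carrier] half(2,3) by (auto dest: dvd_imp_le)
  moreover have "u \<in> T"
    unfolding u_def using subgroup_nat_pow_closed[OF T_subgroup t(1)] .
  ultimately have "K \<noteq> {\<one>}"
    unfolding K_def by blast
  then have "K = T"
    using invariant_subgroup_trivial_or_T[OF K_subgroup \<open>K \<subseteq> T\<close> K_invariant] by blast
  then show ?thesis
    using assms unfolding K_def by blast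
qed

lemma T_interchange:
  assumes "x \<in> T" "y \<in> T" "z \<in> T" "w \<in> T"
  shows "(x \<otimes> y) \<otimes> (z \<otimes> w) = (x \<otimes> z) \<otimes> (y \<otimes> w)"
proof -
  have carrier: "x \<in> carrier G" "y \<in> carrier G" "z \<in> carrier G" "w \<in> carrier G"
    using assms T_carrier by auto
  have "(x \<otimes> y) \<otimes> (z \<otimes> w) = x \<otimes> (y \<otimes> z) \<otimes> w"
    using carrier by (simp add: m_assoc)
  also have "\<dots> = x \<otimes> (z \<otimes> y) \<otimes> w"
    using T_abelian[OF assms(2,3)] by simp
  also have "\<dots> = (x \<otimes> z) \<otimes> (y \<otimes> w)"
    using carrier by (simp add: m_assoc)
  finally show ?thesis .
qed

lemma T_interchange4:
  assumes "x0 \<in> T" "x1 \<in> T" "x2 \<in> T" "x3 \<in> T" "y0 \<in> T" "y1 \<in> T" "y2 \<in> T" "y3 \<in> T"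
  shows "(x0 \<otimes> x1 \<otimes> x2 \<otimes> x3) \<otimes> (y0 \<otimes> y1 \<otimes> y2 \<otimes> y3)
       = (x0 \<otimes> y0) \<otimes> (x1 \<otimes> y1) \<otimes> (x2 \<otimes> y2) \<otimes> (x3 \<otimes> y3)"
proof -
  note closed = subgroup.m_closed[OF T_subgroup]
  have "(x0 \<otimes> x1 \<otimes> x2 \<otimes> x3) \<otimes> (y0 \<otimes> y1 \<otimes> y2 \<otimes> y3)
      = ((x0 \<otimes> x1 \<otimes> x2) \<otimes> (y0 \<otimes> y1 \<otimes> y2)) \<otimes> (x3 \<otimes> y3)"
    using T_interchange[of "x0 \<otimes> x1 \<otimes> x2" x3 "y0 \<otimes> y1 \<otimes> y2" y3] assms closed by simp
  also have "(x0 \<otimes> x1 \<otimes> x2) \<otimes> (y0 \<otimes> y1 \<otimes> y2) = ((x0 \<otimes> x1) \<otimes> (y0 \<otimes> y1)) \<otimes> (x2 \<otimes> y2)"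
    using T_interchange[of "x0 \<otimes> x1" x2 "y0 \<otimes> y1" y2] assms closed by simp
  also have "(x0 \<otimes> x1) \<otimes> (y0 \<otimes> y1) = (x0 \<otimes> y0) \<otimes> (x1 \<otimes> y1)"
    using T_interchange assms by simp
  finally show ?thesis .
qed

lemma T_pow_of_bool_mult:
  "t \<in> T \<Longrightarrow> t [^] (of_bool b :: nat) \<otimes> t [^] (of_bool c :: nat) = t [^] (of_bool (b \<noteq> c) :: nat)"
  using T_exponent2 T_carrier by (cases b; cases c) auto

end

type_synonym f2vec = "bool \<times> bool \<times> bool \<times> bool"

fun vadd :: "f2vec \<Rightarrow> f2vec \<Rightarrow> f2vec" where
  "vadd (v0, v1, v2, v3) (w0, w1, w2, w3) = (v0 \<noteq> w0, v1 \<noteq> w1, v2 \<noteq> w2, v3 \<noteq> w3)"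

fun vmult_x :: "f2vec \<Rightarrow> f2vec" where
  "vmult_x (w0, w1, w2, w3) = (w3, w0 \<noteq> w3, w1 \<noteq> w3, w2 \<noteq> w3)"

definition vzero :: f2vec where "vzero = (False, False, False, False)"

definition vone :: f2vec where "vone = (True, False, False, False)"

lemma card_f2vec: "card (UNIV :: f2vec set) = 16"
  by (simp add: UNIV_Times_UNIV[symmetric] card_cartesian_product del: UNIV_Times_UNIV)

fun model_mult :: "f2vec \<times> nat \<Rightarrow> f2vec \<times> nat \<Rightarrow> f2vec \<times> nat" where
  "model_mult (v, k) (w, l) = (vadd v ((vmult_x ^^ k) w), (k + l) mod 5)"

lemma funpow5_vmult_x: "(vmult_x ^^ 5) v = v"
  by (cases v) (auto simp: numeral_eq_Suc)

definition model_inv :: "f2vec \<times> nat \<Rightarrow> f2vec \<times> nat" where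
  "model_inv c = ((vmult_x ^^ ((5 - snd c) mod 5)) (fst c), (5 - snd c) mod 5)"

lemma model_mult_inv:
  assumes "snd c < 5"
  shows "model_mult c (model_inv c) = (vzero, 0)"
proof (cases c)
  case (Pair v k)
  have "(vmult_x ^^ k) ((vmult_x ^^ ((5 - k) mod 5)) v) = v"
  proof (cases "k = 0")
    case False
    then have "(5 - k) mod 5 = 5 - k" "k + (5 - k) = 5"
      using assms Pair by auto
    moreover have "(vmult_x ^^ k) ((vmult_x ^^ (5 - k)) v) = (vmult_x ^^ (k + (5 - k))) v"
      by (simp add: funpow_add)
    ultimately show ?thesis
      using funpow5_vmult_x by simp
  qed simp
  moreover have "(k + (5 - k) mod 5) mod 5 = 0"
    using assms Pair by (cases "k = 0") auto
  ultimately show ?thesis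
    unfolding Pair model_inv_def vzero_def by (cases v) simp
qed

locale frobenius80_basis = frobenius80 +
  fixes n :: 'a
  assumes n_T: "n \<in> T" and n_ne_one: "n \<noteq> \<one>"
begin

definition e :: "nat \<Rightarrow> 'a" where "e i = (\<sigma> ^^ i) n"

lemma e_0: "e 0 = n"
  unfolding e_def by simp

lemma sigma_e: "\<sigma> (e i) = e (i + 1)"
  by (simp only: e_def funpow.simps comp_apply Suc_eq_plus1[symmetric])

lemma e_T: "e i \<in> T"
proof (induction i)
  case (Suc i)
  then show ?case using sigma_closed[OF Suc] sigma_e[of i] by simp
qed (simp add: e_0 n_T)

lemma e_carrier: "e i \<in> carrier G"
  using T_carrier[OF e_T] .

lemma e_5: "e 5 = n"
  unfolding e_def using funpow5_sigma T_carrier[OF n_T] .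

lemma e_4: "e 4 = e 0 \<otimes> e 1 \<otimes> e 2 \<otimes> e 3"
proof -
  define q where "q = e 0 \<otimes> e 1 \<otimes> e 2 \<otimes> e 3"
  have q_T: "q \<in> T"
    unfolding q_def using e_T subgroup.m_closed[OF T_subgroup] by simp
  have "\<sigma> (q \<otimes> e 4) = e 1 \<otimes> e 2 \<otimes> e 3 \<otimes> e 4 \<otimes> e 5"
    unfolding q_def using e_carrier by (simp add: sigma_mult sigma_e numeral_eq_Suc)
  also have "\<dots> = e 1 \<otimes> e 2 \<otimes> e 3 \<otimes> e 4 \<otimes> e 0"
    using e_5 e_0 by simp
  also have "\<dots> = e 0 \<otimes> (e 1 \<otimes> e 2 \<otimes> e 3 \<otimes> e 4)"
    using T_abelian e_T subgroup.m_closed[OF T_subgroup] by simp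
  also have "\<dots> = q \<otimes> e 4"
    unfolding q_def using e_carrier by (simp add: m_assoc)
  finally have "q \<otimes> e 4 = \<one>"
    using sigma_fixed_eq_one q_T e_T subgroup.m_closed[OF T_subgroup] by blast
  then have "e 4 \<otimes> q = \<one>"
    using inv_comm T_carrier[OF q_T] e_carrier by blast
  then have "e 4 = inv q"
    using inv_equality T_carrier[OF q_T] e_carrier by simp
  also have "inv q = q"
    using inv_equality[OF T_exponent2[OF q_T]] T_carrier[OF q_T] by simp
  finally show ?thesis unfolding q_def .
qed

fun coord :: "f2vec \<Rightarrow> 'a" where
  "coord (b0, b1, b2, b3) =
     e 0 [^] (of_bool b0 :: nat) \<otimes> e 1 [^] (of_bool b1 :: nat) \<otimes>
     e 2 [^] (of_bool b2 :: nat) \<otimes> e 3 [^] (of_bool b3 :: nat)"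

lemma e_pow_of_bool_T: "e i [^] (of_bool b :: nat) \<in> T"
  using e_T e_carrier subgroup.one_closed[OF T_subgroup] by (cases b) auto

lemma coord_T: "coord v \<in> T"
  using e_pow_of_bool_T subgroup.m_closed[OF T_subgroup] by (cases v) simp

lemma coord_carrier: "coord v \<in> carrier G"
  using T_carrier[OF coord_T] .

lemma coord_vadd: "coord v \<otimes> coord w = coord (vadd v w)"
proof -
  obtain v0 v1 v2 v3 where v: "v = (v0, v1, v2, v3)" by (cases v)
  obtain w0 w1 w2 w3 where w: "w = (w0, w1, w2, w3)" by (cases w)
  show ?thesis
    unfolding v w coord.simps vadd.simps
    using T_interchange4[OF e_pow_of_bool_T e_pow_of_bool_T e_pow_of_bool_T e_pow_of_bool_T
        e_pow_of_bool_T e_pow_of_bool_T e_pow_of_bool_T e_pow_of_bool_T]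
      T_pow_of_bool_mult[OF e_T] by simp
qed

lemma coord_vzero: "coord vzero = \<one>"
  unfolding vzero_def by simp

lemma coord_vone: "coord vone = n"
  unfolding vone_def using e_0 T_carrier[OF n_T] by simp

lemma sigma_coord: "\<sigma> (coord v) = coord (vmult_x v)"
proof -
  obtain b0 b1 b2 b3 where v: "v = (b0, b1, b2, b3)" by (cases v)
  have sigma_pow: "\<sigma> (e i [^] (of_bool b :: nat)) = e (i + 1) [^] (of_bool b :: nat)" for i b
    using sigma_e e_carrier a_carrier unfolding \<sigma>_def by (cases b) auto
  have "\<sigma> (coord v) = e 1 [^] (of_bool b0 :: nat) \<otimes> e 2 [^] (of_bool b1 :: nat) \<otimes>
      e 3 [^] (of_bool b2 :: nat) \<otimes> e 4 [^] (of_bool b3 :: nat)"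
    unfolding v coord.simps using e_pow_of_bool_T T_carrier
    by (simp add: sigma_mult sigma_pow numeral_eq_Suc)
  also have "\<dots> = coord (False, b0, b1, b2) \<otimes> coord (b3, b3, b3, b3)"
    using e_4 e_carrier by (cases b3) (simp_all add: m_assoc)
  also have "\<dots> = coord (vmult_x v)"
    unfolding v coord_vadd by (cases b3) simp_all
  finally show ?thesis .
qed

lemma pow_a_coord: "a [^] k \<otimes> coord w = coord ((vmult_x ^^ k) w) \<otimes> a [^] k"
proof (induction k arbitrary: w)
  case (Suc k)
  have "a [^] Suc k \<otimes> coord w = a \<otimes> (a [^] k \<otimes> coord w)"
    by (simp only: nat_pow_Suc2[OF a_carrier] m_assoc[OF a_carrier nat_pow_closed[OF a_carrier] coord_carrier])
  also have "\<dots> = \<sigma> (coord ((vmult_x ^^ k) w)) \<otimes> (a \<otimes> a [^] k)"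
    using Suc a_carrier coord_carrier unfolding \<sigma>_def by (simp add: m_assoc)
  also have "\<dots> = coord ((vmult_x ^^ Suc k) w) \<otimes> a [^] Suc k"
    by (simp only: sigma_coord funpow.simps comp_apply nat_pow_Suc2[OF a_carrier])
  finally show ?case .
qed (simp add: coord_carrier)

fun embed :: "f2vec \<times> nat \<Rightarrow> 'a" where
  "embed (v, k) = coord v \<otimes> a [^] k"

lemma embed_carrier: "embed c \<in> carrier G"
  using coord_carrier a_carrier by (cases c) simp

lemma embed_model_mult: "embed (model_mult c d) = embed c \<otimes> embed d"
proof -
  obtain v k w l where cd: "c = (v, k)" "d = (w, l)" by (cases c, cases d)
  have "embed c \<otimes> embed d = coord v \<otimes> (a [^] k \<otimes> coord w) \<otimes> a [^] l"
    unfolding cd using coord_carrier a_carrier by (simp add: m_assoc)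
  also have "\<dots> = coord v \<otimes> coord ((vmult_x ^^ k) w) \<otimes> (a [^] k \<otimes> a [^] l)"
    using coord_carrier a_carrier by (simp add: pow_a_coord m_assoc)
  also have "\<dots> = coord (vadd v ((vmult_x ^^ k) w)) \<otimes> a [^] (k + l)"
    using a_carrier by (simp add: coord_vadd nat_pow_mult)
  also have "\<dots> = embed (model_mult c d)"
    unfolding cd using pow_mod_eq[OF a_carrier a_pow5] by simp
  finally show ?thesis ..
qed

lemma range_coord: "range coord = T"
proof -
  have subgroup: "subgroup (range coord) G"
  proof (rule subgroupI)
    show "range coord \<subseteq> carrier G" using coord_carrier by auto
  next
    fix x assume "x \<in> range coord"
    then obtain v where v: "x = coord v" by blast
    have "inv (coord v) = coord v"
      using inv_equality[OF T_exponent2[OF coord_T] coord_carrier coord_carrier] .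
    then show "inv x \<in> range coord"
      unfolding v by simp
  next
    fix x y assume "x \<in> range coord" "y \<in> range coord"
    then obtain v w where "x = coord v" "y = coord w" by blast
    then show "x \<otimes> y \<in> range coord"
      by (simp add: coord_vadd)
  qed simp
  have "range coord \<subseteq> T"
    using coord_T by blast
  moreover have "\<sigma> ` range coord \<subseteq> range coord"
  proof (rule image_subsetI)
    fix x assume "x \<in> range coord"
    then obtain v where "x = coord v" by blast
    then show "\<sigma> x \<in> range coord"
      by (simp add: sigma_coord)
  qed
  moreover have "n \<in> range coord"
    using coord_vone by (metis rangeI)
  then have "range coord \<noteq> {\<one>}"
    using n_ne_one by blast
  ultimately show ?thesis
    using invariant_subgroup_trivial_or_T[OF subgroup] by blast
qed

lemma inj_coord: "inj coord"
  using range_coord card_T card_f2vec by (simp add: inj_on_iff_eq_card)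

lemma pow_a_notin_T:
  assumes "0 < d" "d < (5::nat)"
  shows "a [^] d \<notin> T"
proof
  assume "a [^] d \<in> T"
  have "a \<noteq> \<one>" using a_notin_T subgroup.one_closed[OF T_subgroup] by blast
  have A: "subgroup (generate G {a}) G" "card (generate G {a}) = 5"
    using generate_is_subgroup card_generate_prime_pow_eq_one[OF _ a_carrier \<open>a \<noteq> \<one>\<close> a_pow5] a_carrier
    by auto
  have "a [^] d \<in> generate G {a}"
    using subgroup_nat_pow_closed[OF A(1) generate.incl[of a]] by simp
  moreover have "a [^] d \<noteq> \<one>"
    using pow_eq_id[OF a_carrier] card_generate_prime_pow_eq_one[OF _ a_carrier \<open>a \<noteq> \<one>\<close> a_pow5]
      generate_pow_card[OF a_carrier] assms by (auto dest: dvd_imp_le)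
  ultimately have "generate G {a} = generate G {a [^] d}"
    using prime_card_subgroup_eq_generate[OF _ A] by simp
  also have "\<dots> \<subseteq> T"
    using generate_subgroup_incl[OF _ T_subgroup] \<open>a [^] d \<in> T\<close> by blast
  finally show False
    using a_notin_T generate.incl[of a "{a}" G] by blast
qed

lemma coset_exponent_unique:
  assumes eq: "coord v \<otimes> a [^] k = coord w \<otimes> a [^] l" and kl: "k \<le> l" "l < (5::nat)"
  shows "k = l"
proof (rule ccontr)
  assume "k \<noteq> l"
  have "coord (vadd w v) \<otimes> a [^] k = (coord w \<otimes> coord v) \<otimes> a [^] k"
    by (simp only: coord_vadd)
  also have "\<dots> = coord w \<otimes> (coord v \<otimes> a [^] k)"
    using coord_carrier a_carrier by (simp add: m_assoc)
  also have "\<dots> = (coord w \<otimes> coord w) \<otimes> a [^] l"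
    using eq coord_carrier a_carrier by (simp add: m_assoc)
  also have "\<dots> = a [^] (l - k) \<otimes> a [^] k"
    using T_exponent2[OF coord_T] a_carrier kl(1) by (simp add: nat_pow_mult)
  finally have "coord (vadd w v) = a [^] (l - k)"
    using coord_carrier a_carrier by simp
  then have "a [^] (l - k) \<in> T"
    using coord_T by metis
  then show False
    using pow_a_notin_T[of "l - k"] \<open>k \<noteq> l\<close> kl by simp
qed

lemma inj_on_embed: "inj_on embed (UNIV \<times> {..<5})"
proof (rule inj_onI)
  fix c d assume "c \<in> UNIV \<times> {..<5}" "d \<in> UNIV \<times> {..<5}" "embed c = embed d"
  then obtain v k w l where cd: "c = (v, k)" "d = (w, l)" "k < 5" "l < 5"
    and eq: "coord v \<otimes> a [^] k = coord w \<otimes> a [^] l" by (cases c, cases d) auto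
  have "k = l"
    using coset_exponent_unique[OF eq] coset_exponent_unique[OF eq[symmetric]] cd(3,4) by linarith
  then have "coord v = coord w"
    using eq coord_carrier a_carrier by simp
  then show "c = d"
    using cd \<open>k = l\<close> inj_coord by (simp add: inj_eq)
qed

lemma embed_image: "embed ` (UNIV \<times> {..<5}) = carrier G"
proof -
  have "card (embed ` (UNIV \<times> {..<5})) = 80"
    using card_image[OF inj_on_embed] card_f2vec by (simp add: card_cartesian_product)
  moreover have "embed ` (UNIV \<times> {..<5}) \<subseteq> carrier G"
    using embed_carrier by auto
  ultimately show ?thesis
    using card_subset_eq[OF finite_carrier] order unfolding order_def by simp
qed

lemma embed_model_inv: "snd c < 5 \<Longrightarrow> embed (model_inv c) = inv (embed c)"
  using embed_model_mult[of c "model_inv c"] model_mult_inv[of c] coord_vzero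
    inv_equality[OF _ embed_carrier embed_carrier] inv_comm[OF _ embed_carrier embed_carrier]
  by (metis embed.simps l_one nat_pow_0 one_closed)

end

definition model_gens :: "nat \<Rightarrow> (f2vec \<times> nat) list" where
  "model_gens k = [(vzero, 1), (vone, k), model_inv (vzero, 1), model_inv (vone, k)]"

fun model_walk :: "(f2vec \<times> nat) list \<Rightarrow> f2vec \<times> nat \<Rightarrow> nat list \<Rightarrow> (f2vec \<times> nat) list" where
  "model_walk gs c [] = []"
| "model_walk gs c (i # is) = c # model_walk gs (model_mult c (gs ! i)) is"

definition model_hamiltonian :: "(f2vec \<times> nat) list \<Rightarrow> (f2vec \<times> nat) list \<Rightarrow> bool" where
  "model_hamiltonian gs cs \<longleftrightarrow> length cs = 80 \<and> distinct cs \<and> (\<forall>c \<in> set cs. snd c < 5) \<and>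
     (\<forall>i < 80. cs ! ((i + 1) mod 80) \<in> model_mult (cs ! i) ` set gs)"

definition digits :: "string \<Rightarrow> nat list" where
  "digits s = map (\<lambda>c. of_char c - 48) s"

definition model_cycle :: "nat \<Rightarrow> (f2vec \<times> nat) list" where
  "model_cycle k = model_walk (model_gens k) (vzero, 0) (digits (
    if k = 0 then ''10010100101001212101000012210010121010101012212122122122122100122101221012210100''
    else if k = 1 then ''00300122103003332323303212212222110011112103232303321032323223303303212322223300''
    else if k = 2 then ''00300122123001032323303211012121100332323221000032232233212110300332322323232321''
    else if k = 3 then ''00300122103003333010303212212301110000122332112100300032112122223033232332232121''
    else ''00300122103003332330303212221222211223222110121122223032330321232110012212303233''))"

lemma model_cycles_hamiltonian:
  "list_all (\<lambda>k. model_hamiltonian (model_gens k) (model_cycle k)) [0..<5]"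
  by code_simp

lemma model_cycle_hamiltonian: "k < 5 \<Longrightarrow> model_hamiltonian (model_gens k) (model_cycle k)"
  using model_cycles_hamiltonian by (simp add: list_all_iff)

lemma (in frobenius80_basis) cayley_hamiltonian_if_model_hamiltonian:
  assumes S: "S \<subseteq> carrier G" "a \<in> S" "n \<otimes> a [^] k \<in> S" and k: "k < 5"
    and ham: "model_hamiltonian (model_gens k) cs"
  shows "cayley_hamiltonian G S"
proof -
  have len: "length cs = 80" and "distinct cs" and small: "\<forall>c \<in> set cs. snd c < 5"
    and steps: "\<forall>i < 80. cs ! ((i + 1) mod 80) \<in> model_mult (cs ! i) ` set (model_gens k)"
    using ham unfolding model_hamiltonian_def by auto
  define vs where "vs = map embed cs"
  have "set cs \<subseteq> UNIV \<times> {..<5}"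
    using small by auto
  then have "distinct vs"
    unfolding vs_def using \<open>distinct cs\<close> inj_on_subset[OF inj_on_embed] by (simp add: distinct_map)
  moreover have "set vs = carrier G"
  proof -
    have "set vs \<subseteq> carrier G"
      unfolding vs_def using embed_carrier by auto
    moreover have "card (set vs) = 80"
      using distinct_card[OF \<open>distinct vs\<close>] len unfolding vs_def by simp
    ultimately show ?thesis
      using card_subset_eq[OF finite_carrier] order unfolding order_def by simp
  qed
  moreover have gens: "embed g \<in> S \<union> (\<lambda>x. inv x) ` S" if "g \<in> set (model_gens k)" for g
  proof -
    have "embed (vzero, 1) = a" "embed (vone, k) = n \<otimes> a [^] k"
      using coord_vzero coord_vone a_carrier by simp_all
    then show ?thesis
      using that S k embed_model_inv[of "(vzero, 1)"] embed_model_inv[of "(vone, k)"]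
      unfolding model_gens_def by auto
  qed
  moreover have "cayley_adj G S (vs ! i) (vs ! ((i + 1) mod length vs))" if "i < length vs" for i
  proof -
    have "i < 80"
      using that len unfolding vs_def by simp
    then obtain g where g: "g \<in> set (model_gens k)" "cs ! ((i + 1) mod 80) = model_mult (cs ! i) g"
      using steps by blast
    then have "vs ! ((i + 1) mod length vs) = vs ! i \<otimes> embed g"
      using that len embed_model_mult unfolding vs_def by simp
    then show ?thesis
      unfolding cayley_adj_def using gens[OF g(1)] that len embed_carrier unfolding vs_def by auto
  qed
  ultimately show ?thesis
    unfolding cayley_hamiltonian_def using len unfolding vs_def by auto
qed

lemma (in frobenius80) carrier_eq_T_times_pow:
  assumes "x \<in> carrier G"
  obtains t k where "t \<in> T" "k < (5::nat)" "x = t \<otimes> a [^] k"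
proof -
  obtain n where "n \<in> T" "n \<noteq> \<one>"
    using T_ne_one subgroup.one_closed[OF T_subgroup] by blast
  then interpret frobenius80_basis G T a n
    by (intro frobenius80_basis.intro frobenius80_axioms frobenius80_basis_axioms.intro)
  have "x \<in> embed ` (UNIV \<times> {..<5})"
    using assms embed_image by simp
  then obtain v k where "k < 5" "x = embed (v, k)"
    by auto
  then show ?thesis
    using that[OF coord_T[of v]] by simp
qed

lemma (in frobenius80) cayley_hamiltonian_if_generator_outside_T:
  assumes S: "S \<subseteq> carrier G" "generate G S = carrier G" "a \<in> S"
  shows "cayley_hamiltonian G S"
proof -
  have "a \<noteq> \<one>"
    using a_notin_T subgroup.one_closed[OF T_subgroup] by blast
  have pows_a: "generate G {a} = (\<lambda>i. a [^] i) ` {..<5::nat}"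
    using generate_singleton_eq_pows[OF a_carrier a_pow5] by simp
  have "\<not> S \<subseteq> generate G {a}"
  proof
    assume "S \<subseteq> generate G {a}"
    moreover have "subgroup (generate G {a}) G"
      using generate_is_subgroup a_carrier by simp
    ultimately have "carrier G \<subseteq> generate G {a}"
      using S(2) generate_subgroup_incl by blast
    moreover have "finite (generate G {a})"
      unfolding pows_a by simp
    ultimately have "card (carrier G) \<le> card (generate G {a})"
      by (rule card_mono[rotated])
    then show False
      using order card_generate_prime_pow_eq_one[OF _ a_carrier \<open>a \<noteq> \<one>\<close> a_pow5]
      unfolding order_def by simp
  qed
  then obtain y where y: "y \<in> S" "y \<notin> generate G {a}"
    by blast
  then obtain t k where t: "t \<in> T" "k < (5::nat)" "y = t \<otimes> a [^] k"
    using carrier_eq_T_times_pow S(1) by blast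
  have "t \<noteq> \<one>"
  proof
    assume "t = \<one>"
    then have "y = a [^] k"
      using t(3) a_carrier by simp
    then have "y \<in> generate G {a}"
      unfolding pows_a using t(2) by (blast intro: image_eqI)
    then show False
      using y(2) by contradiction
  qed
  then interpret frobenius80_basis G T a t
    using t(1) by (intro frobenius80_basis.intro frobenius80_axioms frobenius80_basis_axioms.intro)
  show ?thesis
    using cayley_hamiltonian_if_model_hamiltonian[OF S(1,3) y(1)[unfolded t(3)] t(2)
        model_cycle_hamiltonian[OF t(2)]] .
qed

lemma (in group) order80_cayley_hamiltonian:
  assumes fin: "finite (carrier G)" and order: "order G = 80"
    and no_normal_sylow5: "\<forall>P. sylow_subgroup G 5 P \<longrightarrow> \<not> P \<lhd> G"
    and S: "S \<subseteq> carrier G" "generate G S = carrier G"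
  shows "cayley_hamiltonian G S"
proof -
  obtain T where T: "T \<lhd> G" "card T = 16" "\<forall>x \<in> carrier G - T. x [^] (5::nat) = \<one>"
    "\<forall>x \<in> carrier G - T. \<forall>t \<in> T. t \<otimes> x = x \<otimes> t \<longrightarrow> t = \<one>"
    using order80_structure[OF fin order no_normal_sylow5] by blast
  have "\<not> S \<subseteq> T"
  proof
    assume "S \<subseteq> T"
    then have "carrier G \<subseteq> T"
      using S(2) generate_subgroup_incl[OF _ normal_imp_subgroup[OF T(1)]] by blast
    moreover have "finite T"
      using T(2) by (simp add: card_ge_0_finite)
    ultimately have "card (carrier G) \<le> 16"
      using card_mono T(2) by metis
    then show False
      using order unfolding order_def by simp
  qed
  then obtain a where a: "a \<in> S" "a \<notin> T"
    by blast
  have "frobenius80 G T a"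
    by (intro frobenius80.intro is_group frobenius80_axioms.intro)
      (use fin order T a S(1) in auto)
  then interpret frobenius80 G T a .
  show ?thesis
    using cayley_hamiltonian_if_generator_outside_T S \<open>a \<in> S\<close> .
qed

theorem mainTheorem7:
  fixes G :: "('a, 'b) monoid_scheme"
  assumes "group G"
    and "finite (carrier G)"
    and "order G = 80"
    and "\<forall>P. sylow_subgroup G 5 P \<longrightarrow> \<not> P \<lhd> G"
  shows "\<forall>S. S \<subseteq> carrier G \<and> generate G S = carrier G \<longrightarrow> cayley_hamiltonian G S"
  using group.order80_cayley_hamiltonian[OF assms(1-4)] by blast

end
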